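(* Let $n\ge2$, $\alpha\in\mathbb C$, and $T=I+\alpha D\in\mathcal L(\mathcal P_n)$. Let $f\in\mathcal P_n$ have degree at least $2$ and simple roots, and suppose $\tau(f)>2|\alpha|(n-1)+1$. Then $$Z(Tf)\subset\{-\alpha\}+Z(f)+\mathbb D\bigl(\gamma_\alpha/\tau(f)\bigr),$$ where $$\gamma_\alpha=2n\bigl(|\alpha|(n-1)+1\bigr)\left(\Bigl(\frac{|\alpha|(n-1)+2}{|\alpha|(n-1)+1}\Bigr)^{n-1}-1\right)\max\Bigl\{|\alpha|^k\Bigl(1-\frac1k\Bigr):k=2,\dots,n\Bigr\}.$$
   Context: $\mathcal P_n$ is the complex vector space of polynomials of degree at most $n$, $D$ the differentiation operator, $I$ the identity. $Z(f)$ is the root set of $f$; $\mathbb D(r)=\{z\in\mathbb C:|z|\le r\}$ and $A+B=\{u+v:u\in A,v\in B\}$. For $f$ of degree $\ge2$ with at least two distinct roots, $\tau(f):=\min\{|w-v|:w\in Z(f),\ v\in Z(f')\setminus\{w\}\}$. *)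

theory Defs
  imports "HOL-Analysis.Analysis" "HOL-Computational_Algebra.Polynomial"
begin

definition Z :: "complex poly \<Rightarrow> complex set" where
  "Z f = {z. poly f z = 0}"

definition Top :: "complex \<Rightarrow> complex poly \<Rightarrow> complex poly" where
  "Top \<alpha> p = p + smult \<alpha> (pderiv p)"

definition tau :: "complex poly \<Rightarrow> real" where
  "tau f = Min {cmod (w - v) | w v. w \<in> Z f \<and> v \<in> Z (pderiv f) - {w}}"

definition gamma :: "nat \<Rightarrow> complex \<Rightarrow> real" where
  "gamma n \<alpha> = 2 * real n * (cmod \<alpha> * (real n - 1) + 1) *
     (((cmod \<alpha> * (real n - 1) + 2) / (cmod \<alpha> * (real n - 1) + 1)) ^ (n - 1) - 1) *
     Max ((\<lambda>k. cmod \<alpha> ^ k * (1 - 1 / real k)) ` {2..n})"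

end

theory Submission
  imports Defs "HOL-Computational_Algebra.Fundamental_Theorem_Algebra"
begin

(* Let z be a zero of T f and u = z + alpha; we look for a root of f close to u.
   If f(u) = 0 there is nothing to prove.  Otherwise:
   (1) Crude localization.  f'(z)/f(z) = -1/alpha, and writing the logarithmic derivative as
       sum 1/(z - x) over the roots x of f, a half-plane argument yields a root w with
       |u - w| <= (deg f - 1)|alpha| <= A := |alpha|(n - 1).
   (2) Hence every critical point v of f satisfies |u - v| >= tau(f) - A =: delta, and the
       Taylor coefficients of f' at u obey |q_j| <= |f'(u)| binom(d-1, j) / delta^j.
   (3) Expanding T f around u, the equation (T f)(u - alpha) = 0 expresses f(u) through the
       higher Taylor coefficients; this gives |f(u)| <= M |f'(u)| ((1 + 1/delta)^(d-1) - 1).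
   (4) Since |f'(u)/f(u)| <= d / dist(u, Z(f)), the distance from u to Z(f) is at most
       d M ((1 + 1/delta)^(d-1) - 1), which is at most gamma/tau by elementary estimates. *)

lemma complex_poly_linear_factors:
  fixes p :: "complex poly"
  assumes "p \<noteq> 0"
  obtains xs where "p = smult (lead_coeff p) (\<Prod>x\<leftarrow>xs. [:- x, 1:])"
    and "length xs = degree p" and "set xs = {x. poly p x = 0}"
proof -
  obtain xs where xs: "mset xs = proots p" using ex_mset by blast
  have "(\<Prod>x\<in>#proots p. [:- x, 1:]) = (\<Prod>x\<leftarrow>xs. [:- x, 1:])"
    by (subst prod_mset_prod_list [symmetric]) (simp add: xs)
  then have "p = smult (lead_coeff p) (\<Prod>x\<leftarrow>xs. [:- x, 1:])"
    using complex_poly_decompose_multiset[of p] by simp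
  moreover have "length xs = degree p"
    by (metis size_mset size_proots_complex xs)
  moreover have "set xs = {x. poly p x = 0}"
    by (metis assms set_mset_mset set_count_proots xs)
  ultimately show thesis using that by blast
qed

lemma poly_linear_factors: "poly (\<Prod>x\<leftarrow>xs. [:- x, 1:]) z = (\<Prod>x\<leftarrow>xs. z - x)"
  for z :: "'a::comm_ring_1"
  by (induction xs) (simp_all add: algebra_simps)

lemma pcompose_shift_linear_factors:
  "(\<Prod>x\<leftarrow>xs. [:- x, 1:]) \<circ>\<^sub>p [:u, 1:] = (\<Prod>x\<leftarrow>xs. [:u - x, 1 :: 'a::comm_ring_1:])"
proof (induction xs)
  case (Cons a xs)
  have "[:- a, 1:] \<circ>\<^sub>p [:u, 1:] = [:u - a, 1 :: 'a:]"
    by (simp add: pcompose_pCons)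
  then show ?case
    using Cons.IH by (simp only: list.map prod_list.Cons pcompose_mult)
qed (simp add: pcompose_1)

(* If all numbers b in bs have modulus at least r, the k-th coefficient of the
   product of the factors (b + x) is at most |prod bs| * (m choose k) / r^k, where m = length bs:
   each elementary symmetric function of the 1/b is bounded termwise. *)
lemma coeff_prod_monic_linear_bound:
  fixes bs :: "'a::real_normed_field list"
  assumes "r > 0" and far: "\<And>b. b \<in> set bs \<Longrightarrow> r \<le> norm b"
  shows "norm (coeff (\<Prod>b\<leftarrow>bs. [:b, 1:]) k) \<le> norm (prod_list bs) * real (length bs choose k) / r ^ k"
  using far
proof (induction bs arbitrary: k)
  case Nil
  then show ?case by (cases k) auto
next
  case (Cons b bs)
  define R where "R = (\<Prod>b\<leftarrow>bs. [:b, 1:])"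
  define P where "P = norm (prod_list bs)"
  have IH: "norm (coeff R j) \<le> P * real (length bs choose j) / r ^ j" for j
    using Cons by (simp add: R_def P_def)
  have rb: "r \<le> norm b" using Cons.prems by simp
  show ?case
  proof (cases k)
    case 0
    have "norm (coeff R 0) \<le> P" using IH[of 0] by simp
    then have "norm b * norm (coeff R 0) \<le> norm b * P" by (simp add: mult_left_mono)
    then show ?thesis using 0 by (simp add: R_def P_def norm_mult)
  next
    case (Suc j)
    have shift: "P * real (length bs choose j) / r ^ j \<le> norm b * (P * real (length bs choose j) / r ^ Suc j)"
    proof -
      have "P * real (length bs choose j) / r ^ j = r * (P * real (length bs choose j) / r ^ Suc j)"
        using \<open>r > 0\<close> by (simp add: field_simps)
      also have "\<dots> \<le> norm b * (P * real (length bs choose j) / r ^ Suc j)"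
        using rb \<open>r > 0\<close> by (intro mult_right_mono) (auto simp: P_def)
      finally show ?thesis .
    qed
    have "norm (coeff (\<Prod>b\<leftarrow>b # bs. [:b, 1:]) k) = norm (b * coeff R (Suc j) + coeff R j)"
      using Suc by (simp add: R_def)
    also have "\<dots> \<le> norm b * norm (coeff R (Suc j)) + norm (coeff R j)"
      by (metis norm_mult norm_triangle_ineq)
    also have "\<dots> \<le> norm b * (P * real (length bs choose Suc j) / r ^ Suc j)
                  + norm b * (P * real (length bs choose j) / r ^ Suc j)"
      by (rule add_mono[OF mult_left_mono[OF IH norm_ge_zero] order_trans[OF IH shift]])
    also have "\<dots> = norm (prod_list (b # bs)) * real (length (b # bs) choose k) / r ^ k"
      using Suc \<open>r > 0\<close> by (simp add: P_def norm_mult field_simps)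
    finally show ?thesis .
  qed
qed

lemma taylor_coeff_bound:
  fixes p :: "complex poly"
  assumes "p \<noteq> 0" and "r > 0" and far: "\<And>x. poly p x = 0 \<Longrightarrow> r \<le> cmod (u - x)"
  shows "cmod (coeff (p \<circ>\<^sub>p [:u, 1:]) k) \<le> cmod (poly p u) * real (degree p choose k) / r ^ k"
proof -
  obtain xs where p: "p = smult (lead_coeff p) (\<Prod>x\<leftarrow>xs. [:- x, 1:])"
    and len: "length xs = degree p" and roots: "set xs = {x. poly p x = 0}"
    using complex_poly_linear_factors[OF \<open>p \<noteq> 0\<close>] by blast
  define bs where "bs = map (\<lambda>x. u - x) xs"
  have shifted: "p \<circ>\<^sub>p [:u, 1:] = smult (lead_coeff p) (\<Prod>b\<leftarrow>bs. [:b, 1:])"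
    by (subst p) (simp add: pcompose_smult pcompose_shift_linear_factors bs_def o_def)
  have at_u: "poly p u = lead_coeff p * prod_list bs"
    by (subst p) (simp add: poly_linear_factors bs_def)
  have "cmod (coeff (\<Prod>b\<leftarrow>bs. [:b, 1:]) k) \<le> cmod (prod_list bs) * real (length bs choose k) / r ^ k"
    using \<open>r > 0\<close> far roots by (intro coeff_prod_monic_linear_bound) (auto simp: bs_def)
  then have "cmod (lead_coeff p) * cmod (coeff (\<Prod>b\<leftarrow>bs. [:b, 1:]) k)
      \<le> cmod (lead_coeff p) * (cmod (prod_list bs) * real (length bs choose k) / r ^ k)"
    by (rule mult_left_mono) simp
  then show ?thesis
    by (simp add: shifted at_u norm_mult len bs_def mult.assoc)
qed

lemma logderiv_linear_factors:
  fixes z :: "'a::field"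
  assumes "poly (\<Prod>x\<leftarrow>xs. [:- x, 1:]) z \<noteq> 0"
  shows "poly (pderiv (\<Prod>x\<leftarrow>xs. [:- x, 1:])) z / poly (\<Prod>x\<leftarrow>xs. [:- x, 1:]) z
           = (\<Sum>x\<leftarrow>xs. 1 / (z - x))"
  using assms
proof (induction xs)
  case Nil
  then show ?case by simp
next
  case (Cons a xs)
  define Q where "Q = (\<Prod>x\<leftarrow>xs. [:- x, 1:])"
  have prod: "(\<Prod>x\<leftarrow>a # xs. [:- x, 1:]) = [:- a, 1:] * Q"
    by (simp only: Q_def list.map prod_list.Cons)
  have val: "poly ([:- a, 1:] * Q) z = (z - a) * poly Q z"
    by (simp add: algebra_simps)
  have deriv: "poly (pderiv ([:- a, 1:] * Q)) z = (z - a) * poly (pderiv Q) z + poly Q z"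
    by (simp only: pderiv_mult poly_add poly_mult) (simp add: pderiv_pCons)
  have "z - a \<noteq> 0" and "poly Q z \<noteq> 0"
    using Cons.prems by (auto simp: prod val Q_def)
  have "poly (pderiv (\<Prod>x\<leftarrow>a # xs. [:- x, 1:])) z / poly (\<Prod>x\<leftarrow>a # xs. [:- x, 1:]) z
      = ((z - a) * poly (pderiv Q) z + poly Q z) / ((z - a) * poly Q z)"
    by (simp only: prod val deriv)
  also have "\<dots> = 1 / (z - a) + poly (pderiv Q) z / poly Q z"
    using \<open>z - a \<noteq> 0\<close> \<open>poly Q z \<noteq> 0\<close> by (simp add: field_simps)
  also have "poly (pderiv Q) z / poly Q z = (\<Sum>x\<leftarrow>xs. 1 / (z - x))"
    using Cons.IH \<open>poly Q z \<noteq> 0\<close> by (simp add: Q_def)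
  finally show ?case by simp
qed

lemma logderiv_sum_roots:
  fixes p :: "complex poly"
  assumes "p \<noteq> 0" and "poly p z \<noteq> 0"
  obtains xs where "length xs = degree p" and "set xs = {x. poly p x = 0}"
    and "poly (pderiv p) z / poly p z = (\<Sum>x\<leftarrow>xs. 1 / (z - x))"
proof -
  obtain xs where p: "p = smult (lead_coeff p) (\<Prod>x\<leftarrow>xs. [:- x, 1:])"
    and "length xs = degree p" and "set xs = {x. poly p x = 0}"
    using complex_poly_linear_factors[OF \<open>p \<noteq> 0\<close>] by blast
  moreover have "poly (pderiv p) z / poly p z = (\<Sum>x\<leftarrow>xs. 1 / (z - x))"
  proof -
    have "lead_coeff p \<noteq> 0" using \<open>p \<noteq> 0\<close> by simp
    moreover have "poly (\<Prod>x\<leftarrow>xs. [:- x, 1:]) z \<noteq> 0"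
      using \<open>poly p z \<noteq> 0\<close> by (subst (asm) p) simp
    ultimately show ?thesis
      using logderiv_linear_factors[of xs z] by (subst (1 2) p) (simp add: pderiv_smult)
  qed
  ultimately show ?thesis using that by blast
qed

lemma Re_quotient_pos:
  fixes b \<alpha> :: complex and c :: real
  assumes "c \<ge> 1" and "cmod b > c * cmod \<alpha>"
  shows "Re ((b + of_real c * \<alpha>) / (b - \<alpha>)) > 0"
proof -
  have "cmod \<alpha> \<le> c * cmod \<alpha>"
    using assms(1) by (simp add: mult_right_mono[of 1 c, simplified])
  then have "b \<noteq> \<alpha>" using assms(2) by auto
  have numerator: "Re ((b + of_real c * \<alpha>) * cnj (b - \<alpha>))
      = (cmod b)\<^sup>2 + (c - 1) * Re (b * cnj \<alpha>) - c * (cmod \<alpha>)\<^sup>2"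
    unfolding cmod_power2 by (simp add: algebra_simps power2_eq_square)
  have "Re (b * cnj \<alpha>) \<ge> - (cmod b * cmod \<alpha>)"
    using complex_Re_le_cmod[of "- (b * cnj \<alpha>)"] by (simp add: norm_mult)
  then have "(c - 1) * Re (b * cnj \<alpha>) \<ge> (c - 1) * (- (cmod b * cmod \<alpha>))"
    using assms(1) by (intro mult_left_mono) auto
  moreover have "(cmod b)\<^sup>2 - (c - 1) * (cmod b * cmod \<alpha>) - c * (cmod \<alpha>)\<^sup>2
      = (cmod b - c * cmod \<alpha>) * (cmod b + cmod \<alpha>)"
    by (simp add: algebra_simps power2_eq_square)
  moreover have "(cmod b - c * cmod \<alpha>) * (cmod b + cmod \<alpha>) > 0"
    using assms \<open>cmod \<alpha> \<le> c * cmod \<alpha>\<close> norm_ge_zero[of \<alpha>] by (intro mult_pos_pos) linarith+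
  ultimately have "Re ((b + of_real c * \<alpha>) * cnj (b - \<alpha>)) > 0"
    unfolding numerator by linarith
  moreover have "Re ((b + of_real c * \<alpha>) / (b - \<alpha>))
      = Re ((b + of_real c * \<alpha>) * cnj (b - \<alpha>)) / (cmod (b - \<alpha>))\<^sup>2"
    by (subst complex_div_cnj) (simp only: Re_divide_of_real)
  ultimately show ?thesis using \<open>b \<noteq> \<alpha>\<close> by simp
qed

lemma Re_sum_list_pos:
  "xs \<noteq> [] \<Longrightarrow> (\<And>x. x \<in> set xs \<Longrightarrow> Re (g x) > 0) \<Longrightarrow> Re (\<Sum>x\<leftarrow>xs. g x) > 0"
proof (induction xs)
  case (Cons a xs)
  then show ?case by (cases "xs = []") (auto intro: add_pos_pos)
qed simp

(* Otherwise every term of the identity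
   sum (1 + d alpha/(z - x)) = 0 would have positive real part by the lemma above. *)
lemma root_near_pole_sum:
  fixes xs :: "complex list" and \<alpha> z :: complex
  assumes "\<alpha> \<noteq> 0" and "length xs \<ge> 2" and "z \<notin> set xs"
    and sum: "(\<Sum>x\<leftarrow>xs. 1 / (z - x)) = - 1 / \<alpha>"
  shows "\<exists>x\<in>set xs. cmod (z + \<alpha> - x) \<le> (real (length xs) - 1) * cmod \<alpha>"
proof (rule ccontr)
  define d where "d = length xs"
  assume "\<not> ?thesis"
  then have far: "cmod (z + \<alpha> - x) > (real d - 1) * cmod \<alpha>" if "x \<in> set xs" for x
    using that by (force simp: d_def)
  define g where "g x = ((z + \<alpha> - x) + of_real (real d - 1) * \<alpha>) / ((z + \<alpha> - x) - \<alpha>)" for x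
  have "Re (g x) > 0" if "x \<in> set xs" for x
    unfolding g_def using far[OF that] assms(2) by (intro Re_quotient_pos) (auto simp: d_def)
  then have pos: "Re (\<Sum>x\<leftarrow>xs. g x) > 0"
    using assms(2) by (intro Re_sum_list_pos) auto
  have "g x = 1 + of_nat d * \<alpha> * (1 / (z - x))" if "x \<in> set xs" for x
  proof -
    have "z - x \<noteq> 0" using assms(3) that by auto
    then show ?thesis unfolding g_def by (simp add: field_simps)
  qed
  then have "(\<Sum>x\<leftarrow>xs. g x) = (\<Sum>x\<leftarrow>xs. 1 + of_nat d * \<alpha> * (1 / (z - x)))"
    by (intro arg_cong[where f = sum_list] map_cong) auto
  also have "\<dots> = of_nat d + of_nat d * \<alpha> * (- 1 / \<alpha>)"
    by (simp only: sum_list_addf sum_list_const_mult sum_list_triv sum d_def) simp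
  also have "\<dots> = 0" using assms(1) by simp
  finally show False using pos by simp
qed

(* Crude localization of a zero z of T f: since f(z) + alpha f'(z) = 0 the
   logarithmic derivative of f at z is -1/alpha, so some root of f lies within
   (deg f - 1)|alpha| of z + alpha. *)
lemma Top_zero_near_root:
  fixes f :: "complex poly"
  assumes "degree f \<ge> 2" and "poly (Top \<alpha> f) z = 0" and "poly f z \<noteq> 0"
  shows "\<exists>w. poly f w = 0 \<and> cmod (z + \<alpha> - w) \<le> (real (degree f) - 1) * cmod \<alpha>"
proof -
  have eq: "poly f z = - \<alpha> * poly (pderiv f) z"
    using assms(2) by (simp add: Top_def eq_neg_iff_add_eq_0)
  then have "\<alpha> \<noteq> 0" and "poly (pderiv f) z \<noteq> 0" using assms(3) by auto
  then have logderiv: "poly (pderiv f) z / poly f z = - 1 / \<alpha>"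
    by (simp add: eq field_simps)
  have "f \<noteq> 0" using assms(1) by auto
  then obtain xs where "length xs = degree f" and roots: "set xs = {x. poly f x = 0}"
    and "poly (pderiv f) z / poly f z = (\<Sum>x\<leftarrow>xs. 1 / (z - x))"
    using logderiv_sum_roots assms(3) by metis
  moreover have "z \<notin> set xs" using roots assms(3) by auto
  ultimately show ?thesis
    using root_near_pole_sum[of \<alpha> xs z] \<open>\<alpha> \<noteq> 0\<close> assms(1) logderiv by auto
qed

lemma poly_pderiv_coeffs:
  "poly (pderiv p) x = (\<Sum>k\<le>degree p. of_nat k * coeff p k * x ^ (k - 1))"
  for p :: "'a::{comm_ring_1,semiring_no_zero_divisors} poly"
proof -
  have "pderiv p = (\<Sum>k\<le>degree p. monom (of_nat k * coeff p k) (k - 1))"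
    using higher_pderiv_sum[of 1 "\<lambda>k. monom (coeff p k) k" "{..degree p}"]
    by (simp add: poly_as_sum_of_monoms pderiv_monom)
  then show ?thesis by (simp add: poly_sum poly_monom)
qed

(* Expanding f around u with coefficients c_k, the operator T acts on (x - u)^k at u - alpha
   by the factor (1 - k):  (T f)(u - alpha) = sum (1 - k) c_k (-alpha)^k. *)
lemma Top_at_shift:
  fixes f :: "complex poly" and u \<alpha> :: complex
  defines "c \<equiv> coeff (f \<circ>\<^sub>p [:u, 1:])"
  shows "poly (Top \<alpha> f) (u - \<alpha>) = (\<Sum>k\<le>degree f. (1 - of_nat k) * c k * (- \<alpha>) ^ k)"
proof -
  define G where "G = f \<circ>\<^sub>p [:u, 1:]"
  have dG: "degree G = degree f" by (simp add: G_def degree_pcompose)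
  have "poly f (u - \<alpha>) = poly G (- \<alpha>)" and "poly (pderiv f) (u - \<alpha>) = poly (pderiv G) (- \<alpha>)"
    by (simp_all add: G_def poly_pcompose pderiv_pcompose pderiv_pCons)
  then have "poly (Top \<alpha> f) (u - \<alpha>) = poly G (- \<alpha>) + \<alpha> * poly (pderiv G) (- \<alpha>)"
    by (simp add: Top_def)
  also have "\<dots> = (\<Sum>k\<le>degree f. c k * (- \<alpha>) ^ k + \<alpha> * (of_nat k * c k * (- \<alpha>) ^ (k - 1)))"
    unfolding poly_altdef[of G] poly_pderiv_coeffs dG
    by (simp add: c_def G_def sum.distrib sum_distrib_left)
  also have "\<dots> = (\<Sum>k\<le>degree f. (1 - of_nat k) * c k * (- \<alpha>) ^ k)"
  proof (intro sum.cong refl)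
    fix k
    show "c k * (- \<alpha>) ^ k + \<alpha> * (of_nat k * c k * (- \<alpha>) ^ (k - 1)) = (1 - of_nat k) * c k * (- \<alpha>) ^ k"
      by (cases k) (simp_all add: algebra_simps)
  qed
  finally show ?thesis .
qed

lemma shifted_coeff_Suc:
  fixes f :: "'a::field_char_0 poly"
  shows "coeff (f \<circ>\<^sub>p [:u, 1:]) (Suc j) = coeff (pderiv f \<circ>\<^sub>p [:u, 1:]) j / of_nat (Suc j)"
proof -
  have "pderiv f \<circ>\<^sub>p [:u, 1:] = pderiv (f \<circ>\<^sub>p [:u, 1:])"
    by (simp add: pderiv_pcompose pderiv_pCons)
  then show ?thesis
    by (simp add: coeff_pderiv del: of_nat_Suc)
qed

lemma binomial_tail:
  fixes x :: real
  shows "(\<Sum>i<m. real (m choose Suc i) * x ^ Suc i) = (1 + x) ^ m - 1"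
proof -
  have "(x + 1) ^ m = (\<Sum>k\<le>m. real (m choose k) * x ^ k)"
    by (simp add: binomial_ring)
  also have "\<dots> = 1 + (\<Sum>i<m. real (m choose Suc i) * x ^ Suc i)"
    by (simp add: sum.atMost_shift)
  finally show ?thesis by (simp add: add.commute)
qed

(* Solve the identity of Top_at_shift for c_0 = f(u)
   and bound each c_(j+1) = q_j/(j+1) by taylor_coeff_bound applied to f'. *)
lemma Top_zero_value_bound:
  fixes f :: "complex poly" and u \<alpha> :: complex and \<delta> M :: real
  assumes "pderiv f \<noteq> 0" and Tz: "poly (Top \<alpha> f) (u - \<alpha>) = 0" and "\<delta> > 0"
    and far: "\<And>v. poly (pderiv f) v = 0 \<Longrightarrow> \<delta> \<le> cmod (u - v)"
    and weight: "\<And>k. 2 \<le> k \<Longrightarrow> k \<le> degree f \<Longrightarrow> cmod \<alpha> ^ k * (1 - 1 / real k) \<le> M"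
  shows "cmod (poly f u) \<le> M * cmod (poly (pderiv f) u) * ((1 + 1 / \<delta>) ^ (degree f - 1) - 1)"
proof -
  define c where "c = coeff (f \<circ>\<^sub>p [:u, 1:])"
  define q where "q = coeff (pderiv f \<circ>\<^sub>p [:u, 1:])"
  define P' where "P' = cmod (poly (pderiv f) u)"
  obtain e where de: "degree f = Suc e"
    using \<open>pderiv f \<noteq> 0\<close> by (metis not0_implies_Suc pderiv_eq_0_iff)
  have dp: "degree (pderiv f) = e" using de by (simp add: degree_pderiv)
  define S where "S = (\<Sum>i<e. of_nat (Suc i) * c (Suc (Suc i)) * (- \<alpha>) ^ Suc (Suc i))"
  have "c 0 = poly f u"
    by (simp add: c_def poly_0_coeff_0[symmetric] poly_pcompose)
  have "(\<Sum>j<Suc e. (1 - of_nat (Suc j)) * c (Suc j) * (- \<alpha>) ^ Suc j) = - S"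
    unfolding S_def sum.lessThan_Suc_shift sum_negf[symmetric] by (simp add: algebra_simps)
  then have "c 0 - S = (\<Sum>k\<le>degree f. (1 - of_nat k) * c k * (- \<alpha>) ^ k)"
    by (simp only: de sum.atMost_shift) simp
  also have "\<dots> = 0"
    using Tz Top_at_shift[of \<alpha> f u] by (simp add: c_def)
  finally have "poly f u = S"
    using \<open>c 0 = poly f u\<close> by simp
  have "cmod (poly f u) \<le> (\<Sum>i<e. cmod (of_nat (Suc i) * c (Suc (Suc i)) * (- \<alpha>) ^ Suc (Suc i)))"
    unfolding \<open>poly f u = S\<close> S_def by (rule norm_sum)
  also have "\<dots> \<le> (\<Sum>i<e. M * P' * (real (e choose Suc i) * (1 / \<delta>) ^ Suc i))"
  proof (rule sum_mono)
    fix i assume "i \<in> {..<e}"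
    have c_q: "c (Suc (Suc i)) = q (Suc i) / of_nat (Suc (Suc i))"
      by (simp only: c_def q_def shifted_coeff_Suc)
    have "cmod (of_nat (Suc i) * c (Suc (Suc i)) * (- \<alpha>) ^ Suc (Suc i))
        = cmod \<alpha> ^ Suc (Suc i) * (1 - 1 / real (Suc (Suc i))) * cmod (q (Suc i))"
      unfolding c_q
      by (simp add: norm_mult norm_divide norm_power field_simps del: of_nat_Suc) (simp add: algebra_simps)
    also have "\<dots> \<le> M * (P' * real (e choose Suc i) / \<delta> ^ Suc i)"
    proof (rule mult_mono)
      show "cmod \<alpha> ^ Suc (Suc i) * (1 - 1 / real (Suc (Suc i))) \<le> M"
        using weight[of "Suc (Suc i)"] \<open>i \<in> {..<e}\<close> de by simp
      show "cmod (q (Suc i)) \<le> P' * real (e choose Suc i) / \<delta> ^ Suc i"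
        unfolding q_def P'_def dp[symmetric]
        using far by (intro taylor_coeff_bound \<open>pderiv f \<noteq> 0\<close> \<open>\<delta> > 0\<close>)
      have "0 \<le> cmod \<alpha> ^ 2 * (1 - 1 / real 2)" by simp
      also have "\<dots> \<le> M" using weight[of 2] de \<open>i \<in> {..<e}\<close> by simp
      finally show "M \<ge> 0" .
    qed simp
    finally show "cmod (of_nat (Suc i) * c (Suc (Suc i)) * (- \<alpha>) ^ Suc (Suc i))
        \<le> M * P' * (real (e choose Suc i) * (1 / \<delta>) ^ Suc i)"
      by (simp add: power_one_over)
  qed
  also have "\<dots> = M * P' * ((1 + 1 / \<delta>) ^ e - 1)"
    by (simp only: sum_distrib_left[symmetric] binomial_tail)
  finally show ?thesis by (simp add: de P'_def)
qed

lemma nearest_root_bound: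
  fixes f :: "complex poly"
  assumes "degree f \<ge> 1" and "poly f u \<noteq> 0"
  shows "\<exists>w. poly f w = 0 \<and> cmod (u - w) * cmod (poly (pderiv f) u) \<le> real (degree f) * cmod (poly f u)"
proof -
  define R where "R = {x. poly f x = 0}"
  define w where "w = arg_min_on (\<lambda>x. cmod (u - x)) R"
  have "f \<noteq> 0" using assms(1) by auto
  then have "finite R" unfolding R_def by (rule poly_roots_finite)
  moreover have "R \<noteq> {}"
    using fundamental_theorem_of_algebra[of f] assms(1) by (auto simp: R_def constant_degree)
  ultimately have "w \<in> R" and nearest: "\<And>x. x \<in> R \<Longrightarrow> cmod (u - w) \<le> cmod (u - x)"
    unfolding w_def by (auto intro: arg_min_if_finite(1) arg_min_least)
  then have "cmod (u - w) > 0" using assms(2) by (auto simp: R_def)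
  have "coeff (f \<circ>\<^sub>p [:u, 1:]) 1 = poly (pderiv f) u"
    using shifted_coeff_Suc[of f u 0] by (simp add: poly_0_coeff_0[symmetric] poly_pcompose)
  then have "cmod (poly (pderiv f) u) \<le> cmod (poly f u) * real (degree f) / cmod (u - w)"
    using taylor_coeff_bound[OF \<open>f \<noteq> 0\<close> \<open>cmod (u - w) > 0\<close>, of u 1] nearest
    by (simp add: R_def)
  then have "cmod (u - w) * cmod (poly (pderiv f) u) \<le> real (degree f) * cmod (poly f u)"
    using \<open>cmod (u - w) > 0\<close> by (simp add: field_simps)
  then show ?thesis using \<open>w \<in> R\<close> by (auto simp: R_def)
qed

lemma tau_le_root_distance:
  fixes f :: "complex poly"
  assumes "rsquarefree f" and "pderiv f \<noteq> 0" and "poly f w = 0" and "poly (pderiv f) v = 0"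
  shows "tau f \<le> cmod (w - v)"
proof -
  let ?S = "{cmod (w - v) | w v. w \<in> Z f \<and> v \<in> Z (pderiv f) - {w}}"
  have "f \<noteq> 0" using assms(1) by (simp add: rsquarefree_def)
  have "?S \<subseteq> (\<lambda>(w, v). cmod (w - v)) ` (Z f \<times> Z (pderiv f))" by auto
  moreover have "finite (Z f \<times> Z (pderiv f))"
    using \<open>f \<noteq> 0\<close> assms(2) poly_roots_finite unfolding Z_def by blast
  ultimately have "finite ?S" by (rule finite_subset[OF _ finite_imageI])
  moreover have "v \<noteq> w" using assms by (auto simp: rsquarefree_roots)
  then have "cmod (w - v) \<in> ?S" using assms(3,4) unfolding Z_def by blast
  ultimately show ?thesis unfolding tau_def by (rule Min_le)
qed

(* ((1 + x)^m - 1)/x = sum_(i<m) (1 + x)^i is increasing in x and in m. *)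
lemma increment_quotient_mono:
  fixes x y :: real
  assumes "0 < x" and "x \<le> y" and "m \<le> N"
  shows "((1 + x) ^ m - 1) / x \<le> ((1 + y) ^ N - 1) / y"
proof -
  have geometric: "((1 + t) ^ k - 1) / t = (\<Sum>i<k. (1 + t) ^ i)" if "t > 0" for t :: real and k
    using power_diff_1_eq[of "1 + t" k] that by simp
  have "(\<Sum>i<m. (1 + x) ^ i) \<le> (\<Sum>i<m. (1 + y) ^ i)"
    using assms by (intro sum_mono power_mono) auto
  also have "\<dots> \<le> (\<Sum>i<N. (1 + y) ^ i)"
    using assms by (intro sum_mono2) auto
  finally show ?thesis using assms geometric by simp
qed

definition power_weight :: "nat \<Rightarrow> complex \<Rightarrow> real" where
  "power_weight n \<alpha> = Max ((\<lambda>k. cmod \<alpha> ^ k * (1 - 1 / real k)) ` {2..n})"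

lemma power_weight_ge: "2 \<le> k \<Longrightarrow> k \<le> n \<Longrightarrow> cmod \<alpha> ^ k * (1 - 1 / real k) \<le> power_weight n \<alpha>"
  unfolding power_weight_def by (intro Max_ge) auto

lemma power_weight_nonneg: "2 \<le> n \<Longrightarrow> 0 \<le> power_weight n \<alpha>"
  using order_trans[OF _ power_weight_ge[of 2 n \<alpha>]] by simp

lemma gamma_eq:
  fixes n :: nat and \<alpha> :: complex
  defines "B \<equiv> cmod \<alpha> * (real n - 1) + 1"
  assumes "n \<ge> 1"
  shows "gamma n \<alpha> = 2 * real n * B * ((1 + 1 / B) ^ (n - 1) - 1) * power_weight n \<alpha>"
proof -
  have "B > 0" using assms by (simp add: B_def add_nonneg_pos)
  then have "1 + 1 / B = (cmod \<alpha> * (real n - 1) + 2) / (cmod \<alpha> * (real n - 1) + 1)"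
    by (simp add: B_def field_simps)
  then show ?thesis by (simp add: gamma_def power_weight_def B_def)
qed

lemma gamma_nonneg: "2 \<le> n \<Longrightarrow> 0 \<le> gamma n \<alpha>"
  using gamma_eq[of n \<alpha>] power_weight_nonneg[of n \<alpha>]
  by simp

lemma gamma_bound:
  fixes \<alpha> :: complex and \<delta> \<tau> :: real
  assumes "2 \<le> n" and "d \<le> n" and B_le: "cmod \<alpha> * (real n - 1) + 1 \<le> \<delta>"
    and "0 < \<tau>" and "\<tau> \<le> 2 * \<delta>"
  shows "real d * power_weight n \<alpha> * ((1 + 1 / \<delta>) ^ (d - 1) - 1) \<le> gamma n \<alpha> / \<tau>"
proof -
  define B where "B = cmod \<alpha> * (real n - 1) + 1"
  define E where "E = (1 + 1 / B) ^ (n - 1) - 1"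
  define W where "W = power_weight n \<alpha>"
  have "B \<ge> 1" using assms(1) by (simp add: B_def)
  then have "\<delta> > 0" using B_le by (simp add: B_def)
  have "W \<ge> 0" using power_weight_nonneg[OF assms(1)] by (simp add: W_def)
  have "1 / \<delta> \<le> 1 / B"
    using B_le \<open>B \<ge> 1\<close> by (intro divide_left_mono) (auto simp: B_def)
  then have "((1 + 1 / \<delta>) ^ (d - 1) - 1) / (1 / \<delta>) \<le> E / (1 / B)"
    unfolding E_def using assms(2) \<open>\<delta> > 0\<close> by (intro increment_quotient_mono) auto
  then have growth: "(1 + 1 / \<delta>) ^ (d - 1) - 1 \<le> B * E / \<delta>"
    using \<open>\<delta> > 0\<close> \<open>B \<ge> 1\<close> by (simp add: field_simps)
  have "E \<ge> 0" using \<open>B \<ge> 1\<close> by (simp add: E_def)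
  have "B * E / \<delta> \<le> B * E / (\<tau> / 2)"
    using assms(4,5) \<open>B \<ge> 1\<close> \<open>E \<ge> 0\<close> by (intro frac_le) auto
  have "real d * W * ((1 + 1 / \<delta>) ^ (d - 1) - 1) \<le> real n * W * (B * E / \<delta>)"
    using assms(2) growth \<open>W \<ge> 0\<close> \<open>\<delta> > 0\<close> by (intro mult_mono) auto
  also have "\<dots> \<le> real n * W * (B * E / (\<tau> / 2))"
    using \<open>B * E / \<delta> \<le> B * E / (\<tau> / 2)\<close> \<open>W \<ge> 0\<close> by (intro mult_left_mono) auto
  also have "\<dots> = gamma n \<alpha> / \<tau>"
    using gamma_eq[of n \<alpha>] assms(1) by (simp add: W_def B_def E_def)
  finally show ?thesis by (simp add: W_def)
qed

(* The
   crude localization puts a root w within A = |alpha|(n - 1) of u = z + alpha, so by the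
   definition of tau all critical points are at distance >= delta = tau - A > A + 1 from u;
   the main estimate then shows that f(u) is small, hence u is close to a root. *)
lemma Top_zero_close_to_root:
  fixes f :: "complex poly" and \<alpha> z :: complex
  assumes "2 \<le> n" and "degree f \<le> n" and "degree f \<ge> 2" and "rsquarefree f"
    and \<tau>: "tau f > 2 * cmod \<alpha> * (real n - 1) + 1"
    and Tz: "poly (Top \<alpha> f) z = 0" and "poly f (z + \<alpha>) \<noteq> 0"
  shows "\<exists>w. poly f w = 0 \<and> cmod (z + \<alpha> - w) \<le> gamma n \<alpha> / tau f"
proof -
  define u where "u = z + \<alpha>"
  define A where "A = cmod \<alpha> * (real n - 1)"
  define \<delta> where "\<delta> = tau f - A"
  have "A \<ge> 0" using assms(1) by (simp add: A_def)
  have "pderiv f \<noteq> 0" using assms(3) by (auto simp: pderiv_eq_0_iff)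
  have "poly f z \<noteq> 0"
  proof
    assume "poly f z = 0"
    moreover from this have "\<alpha> * poly (pderiv f) z = 0" using Tz by (simp add: Top_def)
    ultimately have "\<alpha> = 0" using assms(4) by (auto simp: rsquarefree_roots)
    then show False using \<open>poly f z = 0\<close> assms(7) by simp
  qed
  then obtain w where "poly f w = 0" and "cmod (u - w) \<le> (real (degree f) - 1) * cmod \<alpha>"
    using Top_zero_near_root[OF assms(3) Tz] by (auto simp: u_def)
  moreover have "(real (degree f) - 1) * cmod \<alpha> \<le> A"
    using assms(2) unfolding A_def mult.commute[of "cmod \<alpha>"] by (intro mult_right_mono) auto
  ultimately have "cmod (u - w) \<le> A" by linarith
  have far: "\<delta> \<le> cmod (u - v)" if "poly (pderiv f) v = 0" for v
  proof -
    have "tau f \<le> cmod (w - v)"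
      using tau_le_root_distance[OF assms(4) \<open>pderiv f \<noteq> 0\<close> \<open>poly f w = 0\<close> that] .
    also have "\<dots> \<le> cmod (u - w) + cmod (u - v)"
      using norm_triangle_ineq4[of "u - w" "u - v"] by (simp add: norm_minus_commute)
    finally show ?thesis using \<open>cmod (u - w) \<le> A\<close> by (simp add: \<delta>_def)
  qed
  have "\<delta> \<ge> A + 1" and "tau f \<le> 2 * \<delta>" and "tau f > 0"
    using \<tau> \<open>A \<ge> 0\<close> by (auto simp: \<delta>_def A_def)
  then have "poly (pderiv f) u \<noteq> 0" using far[of u] by auto
  have value_bound: "cmod (poly f u) \<le> power_weight n \<alpha> * cmod (poly (pderiv f) u) * ((1 + 1 / \<delta>) ^ (degree f - 1) - 1)"
    using Top_zero_value_bound[OF \<open>pderiv f \<noteq> 0\<close>, of \<alpha> u \<delta>] Tz far \<open>\<delta> \<ge> A + 1\<close> \<open>A \<ge> 0\<close>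
      power_weight_ge assms(2) by (simp add: u_def)
  obtain w0 where "poly f w0 = 0"
    and nearest: "cmod (u - w0) * cmod (poly (pderiv f) u) \<le> real (degree f) * cmod (poly f u)"
    using nearest_root_bound[of f u] assms(3,7) by (auto simp: u_def)
  have "cmod (u - w0) * cmod (poly (pderiv f) u)
      \<le> (real (degree f) * power_weight n \<alpha> * ((1 + 1 / \<delta>) ^ (degree f - 1) - 1)) * cmod (poly (pderiv f) u)"
    using nearest mult_left_mono[OF value_bound, of "real (degree f)"] by (simp add: mult_ac)
  then have "cmod (u - w0) \<le> real (degree f) * power_weight n \<alpha> * ((1 + 1 / \<delta>) ^ (degree f - 1) - 1)"
    using \<open>poly (pderiv f) u \<noteq> 0\<close> by simp
  also have "\<dots> \<le> gamma n \<alpha> / tau f"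
    using \<open>\<delta> \<ge> A + 1\<close> \<open>tau f \<le> 2 * \<delta>\<close> \<open>tau f > 0\<close> assms(1,2)
    by (intro gamma_bound) (auto simp: A_def)
  finally show ?thesis using \<open>poly f w0 = 0\<close> by (auto simp: u_def)
qed

theorem corollary3p3:
  fixes n :: nat and \<alpha> :: complex and f :: "complex poly"
  assumes "n \<ge> 2"
    and "degree f \<le> n"
    and "degree f \<ge> 2"
    and "rsquarefree f"
    and "tau f > 2 * cmod \<alpha> * (real n - 1) + 1"
  shows "Z (Top \<alpha> f) \<subseteq>
    {- \<alpha> + w + u | w u. w \<in> Z f \<and> cmod u \<le> gamma n \<alpha> / tau f}"
proof
  fix z assume "z \<in> Z (Top \<alpha> f)"
  then have Tz: "poly (Top \<alpha> f) z = 0" by (simp add: Z_def)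
  obtain w where "poly f w = 0" and "cmod (z + \<alpha> - w) \<le> gamma n \<alpha> / tau f"
  proof (cases "poly f (z + \<alpha>) = 0")
    case True
    have "2 * cmod \<alpha> * (real n - 1) \<ge> 0" using assms(1) by simp
    then have "tau f > 0" using assms(5) by linarith
    then have "cmod (z + \<alpha> - (z + \<alpha>)) \<le> gamma n \<alpha> / tau f"
      using gamma_nonneg[OF assms(1)] by simp
    then show ?thesis using that True by blast
  next
    case False
    then show ?thesis using Top_zero_close_to_root[OF assms Tz] that by blast
  qed
  moreover have "z = - \<alpha> + w + (z + \<alpha> - w)" by simp
  ultimately show "z \<in> {- \<alpha> + w + u | w u. w \<in> Z f \<and> cmod u \<le> gamma n \<alpha> / tau f}"
    unfolding Z_def by blast
qed

end
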